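(* Let $\Gamma$ be a hyper-assertion, $\mathbf t$ a hyper-term, $Q$ a post hyper-assertion, and $i,j\in\mathrm{Idx}$ with $j\notin\mathrm{supp}(\mathbf t)\cup\mathrm{idx}(\Gamma)$. If $\Gamma\vdash\mathrm{wp}\,\mathbf t\,\{Q\}$, then $\Gamma\vdash\mathrm{wp}\,\mathbf t\,\{Q[j\mapsto i]\}$.
   Context: Setting. $\mathrm{Val}=\mathbb{Z}$; $\mathrm{PVar}$ is a countably infinite set of program variables; a store is a function $s:\mathrm{PVar}\to\mathrm{Val}$; indices are $\mathrm{Idx}=\mathbb{N}$. Terms of a first-order imperative language are generated by $t ::= v \mid x \mid * \mid t\oplus t \mid \mathtt{skip}\mid x:=t \mid t;t \mid \mathtt{if}\ t\ \mathtt{then}\ t\ \mathtt{else}\ t \mid \mathtt{while}\ t\ \mathtt{do}\ t$, with a nondeterministic big-step semantics $t,s\Downarrow v,s'$. A hyper-term $\mathbf t$ is a finitely supported partial function from $\mathrm{Idx}$ to terms; a hyper-store is a total function $\mathbf s:\mathrm{Idx}\to\mathrm{Store}$; a hyper-return-value is a finitely supported partial function $\mathbf v:\mathrm{Idx}\rightharpoonup\mathrm{Val}$. $\mathbf t,\mathbf s\Downarrow\mathbf v,\mathbf s'$ holds iff for every $i\in\mathrm{supp}(\mathbf t)$, $\mathbf t(i),\mathbf s(i)\Downarrow\mathbf v(i),\mathbf s'(i)$, and for every $i\notin\mathrm{supp}(\mathbf t)$, $\mathbf s'(i)=\mathbf s(i)$ and $\mathbf v(i)$ is undefined. A hyper-assertion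 is a predicate on hyper-stores; a post hyper-assertion is an upward-closed map $Q$ from hyper-return-values to hyper-assertions (if $Q(\mathbf v)(\mathbf s)$ and $\mathbf v'$ agrees with $\mathbf v$ on $\mathrm{supp}(\mathbf v)$ then $Q(\mathbf v')(\mathbf s)$). Entailment $P\vdash R$ means $\forall\mathbf s.\ P(\mathbf s)\Rightarrow R(\mathbf s)$. $\mathrm{wp}\,\mathbf t\,\{Q\}(\mathbf s):\iff\forall\mathbf v,\mathbf s'.\ (\mathbf t,\mathbf s\Downarrow\mathbf v,\mathbf s')\Rightarrow Q(\mathbf v)(\mathbf s')$. Indices of a hyper-assertion: $\mathrm{idx}(P)=\mathrm{Idx}\setminus\{i\mid\forall\mathbf s,s'.\ P(\mathbf s)\Leftrightarrow P(\mathbf s[i:s'])\}$. Reindexing. For $\pi:\mathrm{Idx}\to\mathrm{Idx}$ and a (possibly partial) function $\mathbf a$ on indices, $\mathbf a[\pi]:=\lambda i.\ \mathbf a(\pi(i))$ (undefined where $\mathbf a(\pi(i))$ is). For a hyper-assertion $P$, $P[\pi](\mathbf s):=P(\mathbf s[\pi])$; for a post hyper-assertion $Q$, $Q[\pi]:=\lambda\mathbf v.\ Q(\mathbf v[\pi])[\pi]$. $[j\mapsto i]$ denotes the reindexing $\pi$ with $\pi(j)=i$ and $\pi(k)=k$ for $k\neq j$. *)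

theory Defs
  imports Main
begin

type_synonym val = int
type_synonym pvar = nat
type_synonym store = "pvar \<Rightarrow> val"
type_synonym idx = nat

datatype "term" =
    Val val
  | Var pvar
  | Any
  | BinOp "val \<Rightarrow> val \<Rightarrow> val" "term" "term"
  | Skip
  | Assign pvar "term"
  | Seq "term" "term"
  | If "term" "term" "term"
  | While "term" "term"

(* nondeterministic big-step semantics  t, s \<Down> v, s' ;
   conventions: condition true iff nonzero; skip, assignment and while return 0 *)
inductive bigstep :: "term \<Rightarrow> store \<Rightarrow> val \<Rightarrow> store \<Rightarrow> bool" where
  BVal: "bigstep (Val v) s v s"
| BVar: "bigstep (Var x) s (s x) s"
| BAny: "bigstep Any s v s"
| BOp: "bigstep t1 s v1 s1 \<Longrightarrow> bigstep t2 s1 v2 s2 \<Longrightarrow> bigstep (BinOp f t1 t2) s (f v1 v2) s2"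
| BSkip: "bigstep Skip s 0 s"
| BAssign: "bigstep t s v s1 \<Longrightarrow> bigstep (Assign x t) s 0 (s1(x := v))"
| BSeq: "bigstep t1 s v1 s1 \<Longrightarrow> bigstep t2 s1 v2 s2 \<Longrightarrow> bigstep (Seq t1 t2) s v2 s2"
| BIfT: "bigstep b s vb s1 \<Longrightarrow> vb \<noteq> 0 \<Longrightarrow> bigstep t1 s1 v s2 \<Longrightarrow> bigstep (If b t1 t2) s v s2"
| BIfF: "bigstep b s 0 s1 \<Longrightarrow> bigstep t2 s1 v s2 \<Longrightarrow> bigstep (If b t1 t2) s v s2"
| BWhileF: "bigstep b s 0 s1 \<Longrightarrow> bigstep (While b c) s 0 s1"
| BWhileT: "bigstep b s vb s1 \<Longrightarrow> vb \<noteq> 0 \<Longrightarrow> bigstep c s1 vc s2 \<Longrightarrow>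
            bigstep (While b c) s2 v s3 \<Longrightarrow> bigstep (While b c) s v s3"

type_synonym hterm = "idx \<Rightarrow> term option"      (* finitely supported partial *)
type_synonym hstore = "idx \<Rightarrow> store"
type_synonym hval = "idx \<Rightarrow> val option"        (* finitely supported partial *)
type_synonym hassn = "hstore \<Rightarrow> bool"
type_synonym hpost = "hval \<Rightarrow> hassn"

definition hbigstep :: "hterm \<Rightarrow> hstore \<Rightarrow> hval \<Rightarrow> hstore \<Rightarrow> bool" where
  "hbigstep t s v s' \<longleftrightarrow>
     (\<forall>i \<in> dom t. \<exists>vi. v i = Some vi \<and> bigstep (the (t i)) (s i) vi (s' i)) \<and>
     (\<forall>i. i \<notin> dom t \<longrightarrow> s' i = s i \<and> v i = None)"

definition upward_closed :: "hpost \<Rightarrow> bool" where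
  "upward_closed Q \<longleftrightarrow> (\<forall>v v' s. Q v s \<longrightarrow> finite (dom v') \<longrightarrow>
      (\<forall>i \<in> dom v. v' i = v i) \<longrightarrow> Q v' s)"

definition entails :: "hassn \<Rightarrow> hassn \<Rightarrow> bool" where
  "entails P R \<longleftrightarrow> (\<forall>s. P s \<longrightarrow> R s)"

definition wp :: "hterm \<Rightarrow> hpost \<Rightarrow> hassn" where
  "wp t Q s \<longleftrightarrow> (\<forall>v s'. hbigstep t s v s' \<longrightarrow> Q v s')"

definition idx_of :: "hassn \<Rightarrow> idx set" where
  "idx_of P = UNIV - {i. \<forall>s s'. P s = P (s(i := s'))}"

definition reidx_assn :: "(idx \<Rightarrow> idx) \<Rightarrow> hassn \<Rightarrow> hassn" where
  "reidx_assn \<pi> P = (\<lambda>s. P (\<lambda>i. s (\<pi> i)))"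

definition reidx_post :: "(idx \<Rightarrow> idx) \<Rightarrow> hpost \<Rightarrow> hpost" where
  "reidx_post \<pi> Q = (\<lambda>v. reidx_assn \<pi> (Q (\<lambda>i. v (\<pi> i))))"

definition remap :: "idx \<Rightarrow> idx \<Rightarrow> (idx \<Rightarrow> idx)" where
  "remap j i = id(j := i)"

end

theory Submission
  imports Defs
begin

text \<open>A run of \<open>t\<close> never touches an index \<open>j\<close> outside its support, so copying the final
  store at \<open>i\<close> into position \<open>j\<close> of both the initial and the final hyper-store yields
  another run of \<open>t\<close>. Since \<open>j \<notin> idx(\<Gamma>)\<close>, the modified initial hyper-store still
  satisfies \<open>\<Gamma>\<close>, so \<open>Q\<close> holds of the modified final hyper-store; upward closure lets
  the return value at \<open>j\<close> be set to the one at \<open>i\<close> as well, and this is exactly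
  \<open>Q[j \<mapsto> i]\<close> at the original final hyper-store.\<close>

lemma idx_of_update_invariant:
  assumes "j \<notin> idx_of P"
  shows "P (s(j := x)) = P s"
  using assms unfolding idx_of_def by auto

lemma hbigstep_dom:
  assumes "hbigstep t s v s'"
  shows "dom v = dom t"
  using assms unfolding hbigstep_def by fastforce

lemma hbigstep_update_outside:
  assumes "hbigstep t s v s'" and "j \<notin> dom t"
  shows "hbigstep t (s(j := x)) v (s'(j := x))"
proof -
  have "k \<in> dom t \<Longrightarrow> k \<noteq> j" for k
    using assms(2) by auto
  then show ?thesis
    using assms(1) unfolding hbigstep_def by auto
qed

lemma upward_closed_update_outside:
  assumes "upward_closed Q" and "Q v s" and "finite (dom v)" and "j \<notin> dom v"
  shows "Q (v(j := y)) s"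
proof -
  have "dom (v(j := y)) \<subseteq> insert j (dom v)"
    by auto
  then have "finite (dom (v(j := y)))"
    using assms(3) finite_subset by blast
  moreover have "\<forall>k \<in> dom v. (v(j := y)) k = v k"
    using assms(4) by auto
  ultimately show ?thesis
    using assms(1,2) unfolding upward_closed_def by blast
qed

lemma reindex_remap: "(\<lambda>k. f (remap j i k)) = f(j := f i)"
  unfolding remap_def by auto

lemma reidx_post_remap:
  "reidx_post (remap j i) Q v s = Q (v(j := v i)) (s(j := s i))"
  unfolding reidx_post_def reidx_assn_def reindex_remap ..

theorem mainTheorem11:
  fixes \<Gamma> :: hassn and t :: hterm and Q :: hpost and i j :: idx
  assumes "finite (dom t)"
    and "upward_closed Q"
    and "j \<notin> dom t \<union> idx_of \<Gamma>"
    and "entails \<Gamma> (wp t Q)"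
  shows "entails \<Gamma> (wp t (reidx_post (remap j i) Q))"
  unfolding entails_def wp_def
proof (intro allI impI)
  fix s v s'
  assume "\<Gamma> s" and run: "hbigstep t s v s'"
  have "\<Gamma> (s(j := s' i))"
    using \<open>\<Gamma> s\<close> assms(3) idx_of_update_invariant by blast
  moreover have "hbigstep t (s(j := s' i)) v (s'(j := s' i))"
    using run assms(3) hbigstep_update_outside by blast
  ultimately have "Q v (s'(j := s' i))"
    using assms(4) unfolding entails_def wp_def by blast
  then have "Q (v(j := v i)) (s'(j := s' i))"
    using upward_closed_update_outside[OF assms(2)] assms(1,3) hbigstep_dom[OF run]
    by (metis UnI1)
  then show "reidx_post (remap j i) Q v s'"
    by (simp only: reidx_post_remap)
qed

end
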